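(* Let $f:D\to\{0,1\}$, $D\subseteq\{0,1\}^n$, be a non-constant $n$-bit partial Boolean function. Then $f$ can be computed exactly by a quantum 1-query algorithm if and only if there exists a degree-1 SOS complex representation matrix $A$ of $f$ and $\bar f$ such that $A^\dagger A=\mathrm{diag}(u_0,u_1,\dots,u_n)$ for some numbers $u_0,\dots,u_n$ (i.e. the $n+1$ columns of $A$ are pairwise orthogonal).
   Context: An $n$-bit partial Boolean function is a map $f:D\to\{0,1\}$ with $D\subseteq\{0,1\}^n$; $\bar f(x)=1\oplus f(x)$ on $D$. For $x\in\{0,1\}^n$, $|F(x)\rangle_1=(1,(-1)^{x_1},\dots,(-1)^{x_n})^T$. A degree-1 SOS complex representation matrix of $f$ and $\bar f$ is a $(p+q)\times(n+1)$ complex matrix $A$ with rows $a^1,\dots,a^{p+q}\in\mathbb{C}^{n+1}$ (row vectors; columns indexed by $\emptyset,\{1\},\dots,\{n\}$) such that: $f(x)=\sum_{l=1}^p|a^l|F(x)\rangle_1|^2$ for all $x\in D$; $\sum_{l=1}^{p+q}|a^l|F(x)\rangle_1|^2=1$ for all $x\in\{0,1\}^n$; and hence $\bar f(x)=\sum_{l=p+1}^{p+q}|a^l|F(x)\rangle_1|^2$ for all $x\in D$. A quantum 1-query algorithm works in a finite-dimensional Hilbert space with orthonormal basis $\{|i,j'\rangle\}$, $i\in\{0,\dots,n\}$; the oracle is $O_x|i,j'\rangle=(-1)^{x_i}|i,j'\rangle$ for $i\ge 1$, $O_x|0,j'\rangle=|0,j'\rangle$; the algorithm applies input-independent unitaries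 $U_0,O_x,U_1$ to an initial state and performs a projective measurement with outcomes in $\{0,1\}$; it computes $f$ exactly if for every $x\in D$ the outcome is $f(x)$ with probability 1. *)

theory Defs
  imports Complex_Main "Jordan_Normal_Form.Schur_Decomposition"
begin

text \<open>Bit strings x in {0,1}^n are boolean lists of length n; bit x_i (1 \<le> i \<le> n)
  is x ! (i - 1), with True standing for 1.  A partial Boolean function is a domain
  D (a set of lists of length n) together with f :: bool list \<Rightarrow> bool, where
  f x = True means f(x) = 1; only its values on D matter.\<close>

definition bitstrings :: "nat \<Rightarrow> bool list set" where
  "bitstrings n = {x. length x = n}"

definition sgn_bit :: "bool \<Rightarrow> complex" where
  "sgn_bit b = (if b then -1 else 1)"

definition Fvec :: "nat \<Rightarrow> bool list \<Rightarrow> complex vec" where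
  "Fvec n x = vec (n+1) (\<lambda>j. if j = 0 then 1 else sgn_bit (x ! (j - 1)))"

text \<open>The product
  a^l |F(x)> is the (bilinear, unconjugated) row-times-column product.\<close>
definition sos1_rep_matrix ::
  "nat \<Rightarrow> bool list set \<Rightarrow> (bool list \<Rightarrow> bool) \<Rightarrow> nat \<Rightarrow> nat \<Rightarrow> complex mat \<Rightarrow> bool" where
  "sos1_rep_matrix n D f p q A \<longleftrightarrow>
     A \<in> carrier_mat (p + q) (n + 1) \<and>
     (\<forall>x\<in>D. (if f x then 1 else 0) = (\<Sum>l<p. (cmod (row A l \<bullet> Fvec n x))\<^sup>2)) \<and>
     (\<forall>x\<in>bitstrings n. (\<Sum>l<p+q. (cmod (row A l \<bullet> Fvec n x))\<^sup>2) = 1)"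

definition vnorm2 :: "complex vec \<Rightarrow> real" where
  "vnorm2 v = (\<Sum>i<dim_vec v. (cmod (v $ i))\<^sup>2)"

definition unitary_mat :: "nat \<Rightarrow> complex mat \<Rightarrow> bool" where
  "unitary_mat N U \<longleftrightarrow> U \<in> carrier_mat N N \<and> mat_adjoint U * U = 1\<^sub>m N"

definition orth_projector :: "nat \<Rightarrow> complex mat \<Rightarrow> bool" where
  "orth_projector N P \<longleftrightarrow> P \<in> carrier_mat N N \<and> mat_adjoint P = P \<and> P * P = P"

text \<open>The Hilbert space has orthonormal basis |i,j'> with i \<in> {0..n}, j' \<in> {0..<m};
  the basis vector |i,j'> is the standard basis vector with index i * m + j' of
  C^((n+1) m).\<close>
definition query_op :: "nat \<Rightarrow> nat \<Rightarrow> bool list \<Rightarrow> complex mat" where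
  "query_op n m x = mat ((n+1) * m) ((n+1) * m)
     (\<lambda>(k, l). if k = l then (if k div m = 0 then 1 else sgn_bit (x ! (k div m - 1))) else 0)"

definition exact_1query_computable ::
  "nat \<Rightarrow> bool list set \<Rightarrow> (bool list \<Rightarrow> bool) \<Rightarrow> bool" where
  "exact_1query_computable n D f \<longleftrightarrow>
     (\<exists>m psi U0 U1 P0 P1.
        let N = (n + 1) * m in
        m > 0 \<and> psi \<in> carrier_vec N \<and> vnorm2 psi = 1 \<and>
        unitary_mat N U0 \<and> unitary_mat N U1 \<and>
        orth_projector N P0 \<and> orth_projector N P1 \<and> P0 + P1 = 1\<^sub>m N \<and>
        (\<forall>x\<in>D. vnorm2 ((if f x then P1 else P0) *\<^sub>v (U1 *\<^sub>v (query_op n m x *\<^sub>v (U0 *\<^sub>v psi)))) = 1))"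

end

theory Submission
  imports Defs
begin

text \<open>
  Write the state before the query as \<open>\<phi> = U\<^sub>0 \<psi>\<close> and let \<open>y\<^sub>i\<close> be its component on the
  block \<open>|i,\<cdot>\<rangle>\<close>, so that the query produces \<open>\<Sum>\<^sub>i F(x)\<^sub>i y\<^sub>i\<close>.  The matrix whose
  \<open>i\<close>-th column stacks \<open>P\<^sub>1 U\<^sub>1 y\<^sub>i\<close> over \<open>P\<^sub>0 U\<^sub>1 y\<^sub>i\<close> is then a degree-1 SOS
  representation of \<open>f\<close> and \<open>\<not>f\<close>, and its columns are orthogonal because the \<open>y\<^sub>i\<close> have
  disjoint supports and the stacked map is an isometry.

  Conversely, if the columns \<open>a\<^sub>i\<close> of \<open>A\<close> are orthogonal, their squared norms \<open>r\<^sub>i\<close> sum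
  to 1 (evaluate at \<open>x = 0\<close>), and the normalised nonzero columns form a partial isometry,
  which the Halmos dilation extends to a unitary \<open>U\<close>.  Starting from
  \<open>\<psi> = \<Sum>\<^sub>i \<surd>r\<^sub>i |i,0\<rangle>\<close>, one query followed by \<open>U\<close> yields the vector
  \<open>A F(x)\<close> (padded with zeros), and measuring whether the index is below \<open>p\<close> outputs \<open>f(x)\<close>.
\<close>

section \<open>Adjoints of complex matrices\<close>

lemma dim_mat_adjoint [simp]:
  "dim_row (mat_adjoint A) = dim_col A" "dim_col (mat_adjoint A) = dim_row A"
  unfolding mat_adjoint_def by auto

lemma index_mat_adjoint:
  "i < dim_col A \<Longrightarrow> j < dim_row A \<Longrightarrow> mat_adjoint A $$ (i, j) = cnj (A $$ (j, i))"
  unfolding mat_adjoint_def by (simp add: mat_of_rows_index)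

lemma mat_adjoint_carrier [simp]: "A \<in> carrier_mat r c \<Longrightarrow> mat_adjoint A \<in> carrier_mat c r"
  by auto

lemma mat_adjoint_adjoint [simp]: "mat_adjoint (mat_adjoint (A :: complex mat)) = A"
  by (rule eq_matI) (auto simp: index_mat_adjoint)

lemma mat_adjoint_one [simp]: "mat_adjoint (1\<^sub>m k :: complex mat) = 1\<^sub>m k"
  by (rule eq_matI) (auto simp: index_mat_adjoint)

lemma mat_adjoint_minus:
  "(A :: complex mat) \<in> carrier_mat r c \<Longrightarrow> B \<in> carrier_mat r c \<Longrightarrow>
    mat_adjoint (A - B) = mat_adjoint A - mat_adjoint B"
  by (rule eq_matI) (auto simp: index_mat_adjoint)

lemma mat_adjoint_mult:
  assumes "(A :: complex mat) \<in> carrier_mat r k" "B \<in> carrier_mat k c"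
  shows "mat_adjoint (A * B) = mat_adjoint B * mat_adjoint A"
  using assms
  by (intro eq_matI) (auto simp: index_mat_adjoint scalar_prod_def mult.commute)

lemma mat_adjoint_four_block:
  assumes "(A :: complex mat) \<in> carrier_mat r c" "B \<in> carrier_mat r c'"
    "C \<in> carrier_mat r' c" "D \<in> carrier_mat r' c'"
  shows "mat_adjoint (four_block_mat A B C D) =
    four_block_mat (mat_adjoint A) (mat_adjoint C) (mat_adjoint B) (mat_adjoint D)"
  using assms by (intro eq_matI) (auto simp: index_mat_adjoint)

section \<open>Inner product and squared norm\<close>

text \<open>Conjugate-linear in the first argument, i.e. \<open>cinner v w = w \<bullet>c v\<close>.\<close>

definition cinner :: "complex vec \<Rightarrow> complex vec \<Rightarrow> complex" where
  "cinner v w = (\<Sum>i<dim_vec v. cnj (v $ i) * w $ i)"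

lemma of_real_cmod_square: "complex_of_real ((cmod z)\<^sup>2) = cnj z * z"
  by (simp only: complex_norm_square mult.commute)

lemma of_real_vnorm2: "complex_of_real (vnorm2 v) = cinner v v"
  unfolding vnorm2_def cinner_def of_real_sum of_real_cmod_square ..

lemma vnorm2_nonneg: "vnorm2 v \<ge> 0"
  unfolding vnorm2_def by (simp add: sum_nonneg)

lemma vnorm2_eq_0_iff: "vnorm2 v = 0 \<longleftrightarrow> (\<forall>i < dim_vec v. v $ i = 0)"
  unfolding vnorm2_def by (auto simp: sum_nonneg_eq_0_iff)

lemma sum_lessThan_add:
  "(\<Sum>l<a + b. g l) = (\<Sum>l<a. g l) + (\<Sum>l<b. g (a + l :: nat))"
  by (induction b) (simp_all add: add.assoc)

lemma sum_lessThan_if_less: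
  assumes "p \<le> (N :: nat)"
  shows "(\<Sum>a<N. if a < p then h a else 0) = (\<Sum>a<p. h a)"
proof -
  have "{..<N} \<inter> {..<p} = {..<p}" using assms by auto
  then show ?thesis using sum.inter_restrict[of "{..<N}" h "{..<p}"] by simp
qed

lemma cinner_add_right:
  "w \<in> carrier_vec (dim_vec v) \<Longrightarrow> w' \<in> carrier_vec (dim_vec v) \<Longrightarrow>
    cinner v (w + w') = cinner v w + cinner v w'"
  unfolding cinner_def by (simp add: distrib_left sum.distrib)

lemma cinner_append:
  "dim_vec v' = dim_vec v \<Longrightarrow> dim_vec w' = dim_vec w \<Longrightarrow>
    cinner (v @\<^sub>v w) (v' @\<^sub>v w') = cinner v v' + cinner w w'"
  unfolding cinner_def by (simp add: sum_lessThan_add)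

lemma cinner_adjoint:
  assumes "M \<in> carrier_mat r c" "y \<in> carrier_vec c" "w \<in> carrier_vec r"
  shows "cinner (M *\<^sub>v y) w = cinner y (mat_adjoint M *\<^sub>v w)"
proof -
  have "cinner (M *\<^sub>v y) w = (\<Sum>l<r. \<Sum>a<c. cnj (y $ a) * cnj (M $$ (l, a)) * w $ l)"
    using assms by (simp add: cinner_def scalar_prod_def lessThan_atLeast0 sum_distrib_left mult_ac)
  also have "\<dots> = (\<Sum>a<c. \<Sum>l<r. cnj (y $ a) * cnj (M $$ (l, a)) * w $ l)"
    by (rule sum.swap)
  also have "\<dots> = cinner y (mat_adjoint M *\<^sub>v w)"
    using assms by (simp add: cinner_def scalar_prod_def lessThan_atLeast0 sum_distrib_left
        index_mat_adjoint mult_ac)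
  finally show ?thesis .
qed

lemma cinner_mult_mat_vec:
  assumes "M \<in> carrier_mat r c" "y \<in> carrier_vec c" "z \<in> carrier_vec c"
  shows "cinner (M *\<^sub>v y) (M *\<^sub>v z) = cinner y ((mat_adjoint M * M) *\<^sub>v z)"
  using assms by (simp add: cinner_adjoint assoc_mult_mat_vec[of _ c r _ c])

lemma index_adjoint_mult_self:
  "i < dim_col A \<Longrightarrow> j < dim_col A \<Longrightarrow>
    (mat_adjoint A * A) $$ (i, j) = cinner (col A i) (col A j)"
  by (simp add: cinner_def scalar_prod_def lessThan_atLeast0 index_mat_adjoint)

lemma cinner_unitary:
  assumes "unitary_mat N U" "y \<in> carrier_vec N" "z \<in> carrier_vec N"
  shows "cinner (U *\<^sub>v y) (U *\<^sub>v z) = cinner y z"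
proof -
  have "U \<in> carrier_mat N N" "mat_adjoint U * U = 1\<^sub>m N"
    using assms(1) by (simp_all add: unitary_mat_def)
  then show ?thesis using assms(2,3) by (simp add: cinner_mult_mat_vec)
qed

lemma vnorm2_unitary:
  "unitary_mat N U \<Longrightarrow> y \<in> carrier_vec N \<Longrightarrow> vnorm2 (U *\<^sub>v y) = vnorm2 y"
  using cinner_unitary[of N U y y] by (simp flip: of_real_vnorm2)

lemma cinner_orth_projector_pair:
  assumes P0: "orth_projector N P0" and P1: "orth_projector N P1" and sum: "P0 + P1 = 1\<^sub>m N"
    and y: "y \<in> carrier_vec N" and z: "z \<in> carrier_vec N"
  shows "cinner (P0 *\<^sub>v y) (P0 *\<^sub>v z) + cinner (P1 *\<^sub>v y) (P1 *\<^sub>v z) = cinner y z"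
proof -
  have "P0 \<in> carrier_mat N N" "P1 \<in> carrier_mat N N"
    "mat_adjoint P0 * P0 = P0" "mat_adjoint P1 * P1 = P1"
    using P0 P1 by (simp_all add: orth_projector_def)
  then have "cinner (P0 *\<^sub>v y) (P0 *\<^sub>v z) + cinner (P1 *\<^sub>v y) (P1 *\<^sub>v z) =
      cinner y ((P0 + P1) *\<^sub>v z)"
    using y z by (simp add: cinner_mult_mat_vec cinner_add_right add_mult_distrib_mat_vec)
  then show ?thesis using z by (simp add: sum)
qed

lemma vnorm2_orth_projector_pair:
  "orth_projector N P0 \<Longrightarrow> orth_projector N P1 \<Longrightarrow> P0 + P1 = 1\<^sub>m N \<Longrightarrow>
    y \<in> carrier_vec N \<Longrightarrow> vnorm2 (P0 *\<^sub>v y) + vnorm2 (P1 *\<^sub>v y) = vnorm2 y"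
  using cinner_orth_projector_pair[of N P0 P1 y y]
  by (simp flip: of_real_vnorm2 of_real_add)

lemma sum_sq_row_scalar_prod:
  "dim_row A = r \<Longrightarrow> (\<Sum>l<r. (cmod (row A l \<bullet> v))\<^sup>2) = vnorm2 (A *\<^sub>v v)"
  by (simp add: vnorm2_def)

lemma sum_sq_row_scalar_prod_prefix:
  assumes "A *\<^sub>v v = a @\<^sub>v b" "a \<in> carrier_vec p"
  shows "(\<Sum>l<p. (cmod (row A l \<bullet> v))\<^sup>2) = vnorm2 a"
proof -
  have "row A l \<bullet> v = a $ l" if "l < p" for l
    using arg_cong[OF assms(1), of "\<lambda>u. u $ l"] arg_cong[OF assms(1), of dim_vec] assms(2) that
    by (simp del: index_mult_mat_vec add: index_mult_mat_vec[symmetric])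
  then show ?thesis using assms(2) by (simp add: vnorm2_def)
qed

lemma vnorm2_vec_if_less:
  "p \<le> N \<Longrightarrow> vnorm2 (vec N (\<lambda>s. if s < p then g s else 0)) = (\<Sum>s<p. (cmod (g s))\<^sup>2)"
  unfolding vnorm2_def by (simp add: if_distrib[of "\<lambda>z. (cmod z)\<^sup>2"] sum_lessThan_if_less cong: if_cong)

section \<open>Diagonal unitaries, coordinate projectors and permutations\<close>

lemma index_diag_mat_mult_vec:
  assumes "v \<in> carrier_vec N" "t < N"
  shows "(mat N N (\<lambda>(a, b). if a = b then d a else 0) *\<^sub>v v) $ t = d t * v $ t"
  using assms by (simp add: scalar_prod_def if_distrib[of "\<lambda>z. z * _"] cong: if_cong)

lemma unitary_diag_mat:
  assumes "\<And>a. a < N \<Longrightarrow> cmod (d a) = 1"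
  shows "unitary_mat N (mat N N (\<lambda>(a, b). if a = b then d a else 0))"
proof -
  have "cnj (d a) * d a = 1" if "a < N" for a
    using assms[OF that] by (simp flip: of_real_cmod_square)
  then show ?thesis
    unfolding unitary_mat_def
    by (intro conjI eq_matI) (auto simp: index_mat_adjoint scalar_prod_def if_distrib cong: if_cong)
qed

definition coord_projector :: "nat \<Rightarrow> (nat \<Rightarrow> bool) \<Rightarrow> complex mat" where
  "coord_projector N S = mat N N (\<lambda>(a, b). if a = b then (if S a then 1 else 0) else 0)"

lemma dim_coord_projector [simp]:
  "dim_row (coord_projector N S) = N" "dim_col (coord_projector N S) = N"
  by (simp_all add: coord_projector_def)

lemma orth_projector_coord_projector: "orth_projector N (coord_projector N S)"
proof -
  have "coord_projector N S * coord_projector N S = coord_projector N S"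
  proof (rule eq_matI)
    fix a b assume "a < dim_row (coord_projector N S)" "b < dim_col (coord_projector N S)"
    then have "a < N" "b < N" by (simp_all add: coord_projector_def)
    then show "(coord_projector N S * coord_projector N S) $$ (a, b) = coord_projector N S $$ (a, b)"
      by (simp add: coord_projector_def scalar_prod_def if_distrib[of "\<lambda>z. z * _"] cong: if_cong)
  qed (simp_all add: coord_projector_def)
  then show ?thesis
    unfolding orth_projector_def
    by (auto simp: coord_projector_def index_mat_adjoint intro!: eq_matI)
qed

lemma coord_projector_add_complement:
  "coord_projector N (\<lambda>a. \<not> S a) + coord_projector N S = 1\<^sub>m N"
  by (rule eq_matI) (simp_all add: coord_projector_def)

lemma index_coord_projector_mult_vec:
  "v \<in> carrier_vec N \<Longrightarrow> t < N \<Longrightarrow> (coord_projector N S *\<^sub>v v) $ t = (if S t then v $ t else 0)"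
  using index_diag_mat_mult_vec[of v N t "\<lambda>a. if S a then 1 else 0"]
  unfolding coord_projector_def by simp

lemma vnorm2_coord_projector_prefix:
  assumes v: "v \<in> carrier_vec N" and "p \<le> N"
  shows "vnorm2 (coord_projector N (\<lambda>s. s < p) *\<^sub>v v) = (\<Sum>s<p. (cmod (v $ s))\<^sup>2)"
proof -
  have "vnorm2 (coord_projector N (\<lambda>s. s < p) *\<^sub>v v) = (\<Sum>s<N. if s < p then (cmod (v $ s))\<^sup>2 else 0)"
    unfolding vnorm2_def
    by (intro sum.cong) (simp_all del: index_mult_mat_vec add: index_coord_projector_mult_vec[OF v])
  then show ?thesis using \<open>p \<le> N\<close> by (simp add: sum_lessThan_if_less)
qed

lemma unitary_permute_cols:
  assumes U: "unitary_mat N U" and \<sigma>: "inj_on \<sigma> {..<N}" "\<sigma> ` {..<N} \<subseteq> {..<N}"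
  shows "unitary_mat N (mat N N (\<lambda>(s, t). U $$ (s, \<sigma> t)))" (is "unitary_mat N ?V")
  unfolding unitary_mat_def
proof (intro conjI eq_matI)
  fix a b assume "a < dim_row (1\<^sub>m N :: complex mat)" "b < dim_col (1\<^sub>m N :: complex mat)"
  then have ab: "a < N" "b < N" by simp_all
  have \<sigma>ab: "\<sigma> a < N" "\<sigma> b < N" using ab \<sigma>(2) by auto
  have UU: "U \<in> carrier_mat N N" "mat_adjoint U * U = 1\<^sub>m N"
    using U by (simp_all add: unitary_mat_def)
  have "(mat_adjoint ?V * ?V) $$ (a, b) = (mat_adjoint U * U) $$ (\<sigma> a, \<sigma> b)"
    using ab \<sigma>ab UU(1) by (simp add: scalar_prod_def index_mat_adjoint)
  also have "\<dots> = 1\<^sub>m N $$ (a, b)"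
    using ab \<sigma>ab by (simp add: UU(2) inj_on_eq_iff[OF \<sigma>(1)])
  finally show "(mat_adjoint ?V * ?V) $$ (a, b) = 1\<^sub>m N $$ (a, b)" .
qed auto

lemma sum_lessThan_mult_multiples:
  fixes g :: "nat \<Rightarrow> 'a :: comm_monoid_add"
  assumes m: "m > 0" and g: "\<And>t. t < k * m \<Longrightarrow> t mod m \<noteq> 0 \<Longrightarrow> g t = 0"
  shows "(\<Sum>t<k * m. g t) = (\<Sum>i<k. g (i * m))"
proof -
  have "inj_on (\<lambda>i. i * m) {..<k}"
    using m by (simp add: inj_on_def)
  then have "(\<Sum>i<k. g (i * m)) = sum g ((\<lambda>i. i * m) ` {..<k})"
    by (simp add: sum.reindex)
  also have "\<dots> = (\<Sum>t<k * m. g t)"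
  proof (rule sum.mono_neutral_left)
    show "(\<lambda>i. i * m) ` {..<k} \<subseteq> {..<k * m}"
      using m by auto
    show "\<forall>t\<in>{..<k * m} - (\<lambda>i. i * m) ` {..<k}. g t = 0"
    proof
      fix t assume t: "t \<in> {..<k * m} - (\<lambda>i. i * m) ` {..<k}"
      have "t mod m \<noteq> 0"
      proof
        assume "t mod m = 0"
        then have "t = (t div m) * m" using div_mult_mod_eq[of t m] by simp
        moreover have "t div m < k" using t by (simp add: less_mult_imp_div_less)
        ultimately show False using t by blast
      qed
      then show "g t = 0" using g t by simp
    qed
  qed simp
  finally show ?thesis ..
qed

lemma inj_on_grid_transpose:
  fixes k m :: nat
  shows "inj_on (\<lambda>t. t mod m * k + t div m) {..<k * m}"
    and "(\<lambda>t. t mod m * k + t div m) ` {..<k * m} \<subseteq> {..<k * m}"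
proof -
  have inverse: "(t mod m * k + t div m) mod k * m + (t mod m * k + t div m) div k = t"
    if "t < k * m" for t
  proof -
    have "t div m < k" using that by (simp add: less_mult_imp_div_less)
    then show ?thesis by simp
  qed
  show "inj_on (\<lambda>t. t mod m * k + t div m) {..<k * m}"
    by (rule inj_onI) (metis inverse lessThan_iff)
  show "(\<lambda>t. t mod m * k + t div m) ` {..<k * m} \<subseteq> {..<k * m}"
  proof clarify
    fix t assume t: "t < k * m"
    then have "m > 0" "t div m < k" by (auto simp: less_mult_imp_div_less intro: gr0I)
    then have "t mod m * k + t div m < (t mod m + 1) * k" by simp
    also have "\<dots> \<le> m * k" using \<open>m > 0\<close> by (intro mult_right_mono) (simp_all add: Suc_leI)
    finally show "t mod m * k + t div m < k * m" by (simp add: mult.commute)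
  qed
qed

section \<open>Matrices with orthogonal columns\<close>

lemma diagonal_mat_iff_exists:
  "A \<in> carrier_mat k k \<Longrightarrow>
    diagonal_mat A \<longleftrightarrow> (\<exists>u. A = mat k k (\<lambda>(i, j). if i = j then u i else 0))"
  by (auto simp: diagonal_mat_def intro!: exI[of _ "\<lambda>i. A $$ (i, i)"] eq_matI)

lemma adjoint_mult_self_diagonal:
  fixes A :: "complex mat"
  assumes A: "A \<in> carrier_mat r c" and diag: "diagonal_mat (mat_adjoint A * A)"
  shows "mat_adjoint A * A = mat c c (\<lambda>(i, j). if i = j then of_real (vnorm2 (col A i)) else 0)"
proof (rule eq_matI)
  fix i j assume "i < dim_row (mat c c (\<lambda>(i, j). if i = j then of_real (vnorm2 (col A i)) else 0))"
    "j < dim_col (mat c c (\<lambda>(i, j). if i = j then of_real (vnorm2 (col A i)) else 0 :: complex))"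
  then have ij: "i < c" "j < c" by simp_all
  have "(mat_adjoint A * A) $$ (i, j) = cinner (col A i) (col A j)"
    using A ij by (intro index_adjoint_mult_self) auto
  moreover have "i \<noteq> j \<Longrightarrow> (mat_adjoint A * A) $$ (i, j) = 0"
    using diag A ij unfolding diagonal_mat_def by auto
  ultimately show "(mat_adjoint A * A) $$ (i, j) =
      mat c c (\<lambda>(i, j). if i = j then of_real (vnorm2 (col A i)) else 0) $$ (i, j)"
    using ij by (auto simp: of_real_vnorm2)
qed (use A in auto)

lemma orthogonal_columns_gram:
  fixes A :: "complex mat"
  assumes A: "A \<in> carrier_mat P c" and diag: "diagonal_mat (mat_adjoint A * A)"
    and a: "a < c" and b: "b < c"
  shows "(\<Sum>s<P. cnj (A $$ (s, a)) * A $$ (s, b)) = (if a = b then of_real (vnorm2 (col A a)) else 0)"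
proof -
  have "(\<Sum>s<P. cnj (A $$ (s, a)) * A $$ (s, b)) = cinner (col A a) (col A b)"
    using A a b by (simp add: cinner_def)
  also have "\<dots> = (mat_adjoint A * A) $$ (a, b)"
    using A a b by (intro index_adjoint_mult_self[symmetric]) auto
  also have "\<dots> = (if a = b then of_real (vnorm2 (col A a)) else 0)"
    using a b by (simp add: adjoint_mult_self_diagonal[OF A diag])
  finally show ?thesis .
qed

lemma vnorm2_mult_orthogonal_columns:
  fixes A :: "complex mat"
  assumes A: "A \<in> carrier_mat r c" and diag: "diagonal_mat (mat_adjoint A * A)"
    and v: "v \<in> carrier_vec c"
  shows "vnorm2 (A *\<^sub>v v) = (\<Sum>j<c. (cmod (v $ j))\<^sup>2 * vnorm2 (col A j))"
proof -
  have "cinner (A *\<^sub>v v) (A *\<^sub>v v) = cinner v ((mat_adjoint A * A) *\<^sub>v v)"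
    by (rule cinner_mult_mat_vec[OF A v v])
  also have "\<dots> = (\<Sum>j<c. cnj (v $ j) * (of_real (vnorm2 (col A j)) * v $ j))"
    unfolding cinner_def adjoint_mult_self_diagonal[OF A diag]
    using v index_diag_mat_mult_vec[OF v, where d = "\<lambda>i. of_real (vnorm2 (col A i))"]
    by (intro sum.cong) auto
  also have "\<dots> = of_real (\<Sum>j<c. (cmod (v $ j))\<^sup>2 * vnorm2 (col A j))"
    unfolding of_real_sum of_real_mult of_real_cmod_square by (simp add: mult_ac)
  finally show ?thesis
    unfolding of_real_vnorm2[symmetric] of_real_eq_iff .
qed

lemma one_minus_mult_mat:
  fixes X Y :: "complex mat"
  assumes "X \<in> carrier_mat K K" "Y \<in> carrier_mat K K"
  shows "(1\<^sub>m K - X) * Y = Y - X * Y" "Y * (1\<^sub>m K - X) = Y - Y * X"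
  using assms by (simp_all add: minus_mult_distrib_mat[of _ K K] mult_minus_distrib_mat[of Y K K _ K])

lemma one_minus_idempotent_mat:
  fixes X :: "complex mat"
  assumes X: "X \<in> carrier_mat K K" and XX: "X * X = X"
  shows "(1\<^sub>m K - X) * (1\<^sub>m K - X) = 1\<^sub>m K - X"
proof -
  have "1\<^sub>m K - X \<in> carrier_mat K K" using X by (rule minus_carrier_mat)
  then have "(1\<^sub>m K - X) * (1\<^sub>m K - X) = (1\<^sub>m K - X) - (X - X * X)"
    using one_minus_mult_mat[OF X] X by simp
  then show ?thesis using X XX by (auto intro!: eq_matI)
qed

lemma partial_isometry_adjoint:
  fixes V :: "complex mat"
  assumes V: "V \<in> carrier_mat K K" and VWV: "V * mat_adjoint V * V = V"
  shows "mat_adjoint V * V * mat_adjoint V = mat_adjoint V"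
proof -
  have "mat_adjoint (V * mat_adjoint V * V) = mat_adjoint V * mat_adjoint (V * mat_adjoint V)"
    using V by (intro mat_adjoint_mult) auto
  also have "\<dots> = mat_adjoint V * V * mat_adjoint V"
    using V by (simp add: mat_adjoint_mult[of _ K K _ K] assoc_mult_mat[of _ K K _ K _ K])
  finally show ?thesis using VWV by simp
qed

text \<open>Halmos' unitary dilation of a partial isometry.\<close>

lemma unitary_dilation_partial_isometry:
  fixes V :: "complex mat"
  assumes V: "V \<in> carrier_mat K K" and VWV: "V * mat_adjoint V * V = V"
  shows "unitary_mat (K + K)
    (four_block_mat V (1\<^sub>m K - V * mat_adjoint V) (1\<^sub>m K - mat_adjoint V * V) (mat_adjoint V))"
proof -
  define W where "W = mat_adjoint V"
  define Q where "Q = V * W"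
  define D where "D = W * V"
  have W: "W \<in> carrier_mat K K" and Q: "Q \<in> carrier_mat K K" and D: "D \<in> carrier_mat K K"
    using V unfolding W_def Q_def D_def by (auto intro!: mult_carrier_mat)
  have WVW: "W * V * W = W"
    using partial_isometry_adjoint[OF V VWV] by (simp add: W_def)
  have QV: "Q * V = V" and VD: "V * D = V" and WQ: "W * Q = W" and DW: "D * W = W"
    using VWV[folded W_def] WVW V W by (simp_all add: Q_def D_def assoc_mult_mat[of _ K K _ K _ K])
  have QQ: "Q * Q = Q" and DD: "D * D = D"
    using QV DW V W by (simp_all add: Q_def D_def assoc_mult_mat[of _ K K _ K _ K])
  have "mat_adjoint (1\<^sub>m K - Q) = 1\<^sub>m K - Q" "mat_adjoint (1\<^sub>m K - D) = 1\<^sub>m K - D"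
    using V Q D
    by (simp_all add: mat_adjoint_minus[of _ K K] W_def Q_def D_def mat_adjoint_mult[of _ K K _ K])
  then have "mat_adjoint (four_block_mat V (1\<^sub>m K - Q) (1\<^sub>m K - D) W) =
      four_block_mat W (1\<^sub>m K - D) (1\<^sub>m K - Q) V"
    using V W Q D by (subst mat_adjoint_four_block[where r=K and c=K and r'=K and c'=K]) (auto simp: W_def)
  moreover have "four_block_mat W (1\<^sub>m K - D) (1\<^sub>m K - Q) V * four_block_mat V (1\<^sub>m K - Q) (1\<^sub>m K - D) W
    = four_block_mat (D + (1\<^sub>m K - D) * (1\<^sub>m K - D)) (W * (1\<^sub>m K - Q) + (1\<^sub>m K - D) * W)
        ((1\<^sub>m K - Q) * V + V * (1\<^sub>m K - D)) ((1\<^sub>m K - Q) * (1\<^sub>m K - Q) + Q)"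
    using V W Q D by (subst mult_four_block_mat[of _ K K]) (auto simp: D_def Q_def)
  moreover have "D + (1\<^sub>m K - D) * (1\<^sub>m K - D) = 1\<^sub>m K" "(1\<^sub>m K - Q) * (1\<^sub>m K - Q) + Q = 1\<^sub>m K"
    "W * (1\<^sub>m K - Q) + (1\<^sub>m K - D) * W = 0\<^sub>m K K" "(1\<^sub>m K - Q) * V + V * (1\<^sub>m K - D) = 0\<^sub>m K K"
    using V W Q D
    by (auto simp: one_minus_idempotent_mat DD QQ one_minus_mult_mat WQ DW QV VD intro!: eq_matI)
  ultimately show ?thesis
    using V W Q D by (simp add: unitary_mat_def Q_def W_def D_def)
qed

definition normalize_columns :: "nat \<Rightarrow> complex mat \<Rightarrow> complex mat" where
  "normalize_columns K A = mat K K (\<lambda>(s, j).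
    if s < dim_row A \<and> j < dim_col A then A $$ (s, j) / of_real (sqrt (vnorm2 (col A j))) else 0)"

lemma adjoint_mult_normalize_columns:
  fixes A :: "complex mat"
  assumes A: "A \<in> carrier_mat P c" and diag: "diagonal_mat (mat_adjoint A * A)" and PK: "P \<le> K"
  shows "mat_adjoint (normalize_columns K A) * normalize_columns K A =
    mat K K (\<lambda>(a, b). if a = b then if a < c \<and> vnorm2 (col A a) \<noteq> 0 then 1 else 0 else 0)"
    (is "_ = ?D")
proof (rule eq_matI)
  define \<rho> where "\<rho> j = complex_of_real (sqrt (vnorm2 (col A j)))" for j
  have \<rho>_sq: "cnj (\<rho> j) * \<rho> j = of_real (vnorm2 (col A j))" for j
    unfolding \<rho>_def by (simp flip: of_real_mult add: vnorm2_nonneg)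
  fix a b assume "a < dim_row ?D" "b < dim_col ?D"
  then have ab: "a < K" "b < K" by simp_all
  have "(mat_adjoint (normalize_columns K A) * normalize_columns K A) $$ (a, b) =
      (\<Sum>s<K. if s < P then (if a < c \<and> b < c
        then cnj (A $$ (s, a)) * A $$ (s, b) / (cnj (\<rho> a) * \<rho> b) else 0) else 0)"
    using A ab
    by (auto simp: normalize_columns_def \<rho>_def scalar_prod_def lessThan_atLeast0 index_mat_adjoint
        intro!: sum.cong)
  also have "\<dots> = (if a < c \<and> b < c
      then (\<Sum>s<P. cnj (A $$ (s, a)) * A $$ (s, b)) / (cnj (\<rho> a) * \<rho> b) else 0)"
    using PK by (cases "a < c"; cases "b < c") (simp_all add: sum_lessThan_if_less sum_divide_distrib)
  also have "\<dots> = ?D $$ (a, b)"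
    using ab by (auto simp: orthogonal_columns_gram[OF A diag] \<rho>_sq)
  finally show "(mat_adjoint (normalize_columns K A) * normalize_columns K A) $$ (a, b) = ?D $$ (a, b)" .
qed (simp_all add: normalize_columns_def)

lemma orthogonal_columns_unitary_factor:
  fixes A :: "complex mat"
  assumes A: "A \<in> carrier_mat P c" and diag: "diagonal_mat (mat_adjoint A * A)"
    and PK: "P \<le> K" and cK: "c \<le> K"
  obtains U where "unitary_mat (K + K) U"
    "\<And>s j. s < K + K \<Longrightarrow> j < c \<Longrightarrow>
      U $$ (s, j) * of_real (sqrt (vnorm2 (col A j))) = (if s < P then A $$ (s, j) else 0)"
proof -
  define V where "V = normalize_columns K A"
  define D where "D = mat K K (\<lambda>(a, b). if a = b then if a < c \<and> vnorm2 (col A a) \<noteq> 0 then 1 else 0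
    else (0 :: complex))"
  have V: "V \<in> carrier_mat K K" and VV: "mat_adjoint V * V = D"
    using adjoint_mult_normalize_columns[OF A diag PK]
    by (simp_all add: V_def D_def normalize_columns_def)
  \<comment> \<open>Where the column norm is 0, division yields 0, so zero columns of \<open>A\<close> stay zero in \<open>V\<close>.\<close>
  have "V * D = V"
    using A V
    by (intro eq_matI) (auto simp: V_def D_def normalize_columns_def scalar_prod_def
        if_distrib[of "\<lambda>z. _ * z"] cong: if_cong)
  then have "V * mat_adjoint V * V = V"
    using V by (simp add: assoc_mult_mat[of V K K _ K _ K] VV)
  then have U: "unitary_mat (K + K)
      (four_block_mat V (1\<^sub>m K - V * mat_adjoint V) (1\<^sub>m K - D) (mat_adjoint V))"
    using unitary_dilation_partial_isometry[OF V] by (simp add: VV)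
  have zero_col: "A $$ (s, j) = 0" if "vnorm2 (col A j) = 0" "s < P" "j < c" for s j
    using that A by (simp add: vnorm2_eq_0_iff)
  show ?thesis
  proof (rule that[OF U])
    fix s j assume s: "s < K + K" and j: "j < c"
    show "four_block_mat V (1\<^sub>m K - V * mat_adjoint V) (1\<^sub>m K - D) (mat_adjoint V) $$ (s, j) *
        of_real (sqrt (vnorm2 (col A j))) = (if s < P then A $$ (s, j) else 0)"
      using s j cK PK V A zero_col[of j s]
      by (auto simp: D_def V_def normalize_columns_def)
  qed
qed

section \<open>One-query algorithms and SOS representations\<close>

lemma cmod_sgn_bit [simp]: "cmod (sgn_bit b) = 1"
  unfolding sgn_bit_def by simp

lemma query_op_carrier [simp]: "query_op n m x \<in> carrier_mat ((n + 1) * m) ((n + 1) * m)"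
  by (simp add: query_op_def)

lemma unitary_query_op: "unitary_mat ((n + 1) * m) (query_op n m x)"
  unfolding query_op_def by (rule unitary_diag_mat) simp

lemma index_query_op_mult_vec:
  assumes "v \<in> carrier_vec ((n + 1) * m)" "t < (n + 1) * m"
  shows "(query_op n m x *\<^sub>v v) $ t = Fvec n x $ (t div m) * v $ t"
proof -
  have "t div m < n + 1"
    using assms(2) by (simp add: less_mult_imp_div_less)
  then show ?thesis
    using assms unfolding query_op_def index_diag_mat_mult_vec[OF assms] by (simp add: Fvec_def)
qed

lemma Fvec_carrier [simp]: "Fvec n x \<in> carrier_vec (n + 1)"
  by (simp add: Fvec_def)

lemma cmod_Fvec: "j < n + 1 \<Longrightarrow> cmod (Fvec n x $ j) = 1"
  by (simp add: Fvec_def)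

lemma exact_1query_computableI:
  assumes "m > 0" "\<psi> \<in> carrier_vec ((n + 1) * m)" "vnorm2 \<psi> = 1"
    "unitary_mat ((n + 1) * m) U0" "unitary_mat ((n + 1) * m) U1"
    "orth_projector ((n + 1) * m) P0" "orth_projector ((n + 1) * m) P1" "P0 + P1 = 1\<^sub>m ((n + 1) * m)"
    "\<And>x. x \<in> D \<Longrightarrow>
      vnorm2 ((if f x then P1 else P0) *\<^sub>v (U1 *\<^sub>v (query_op n m x *\<^sub>v (U0 *\<^sub>v \<psi>)))) = 1"
  shows "exact_1query_computable n D f"
  using assms unfolding exact_1query_computable_def Let_def by blast

lemma measurement_stack_mult_vec:
  assumes "U \<in> carrier_mat N N" "P0 \<in> carrier_mat N N" "P1 \<in> carrier_mat N N" "v \<in> carrier_vec N"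
  shows "((P1 * U) @\<^sub>r (P0 * U)) *\<^sub>v v = (P1 *\<^sub>v (U *\<^sub>v v)) @\<^sub>v (P0 *\<^sub>v (U *\<^sub>v v))"
  using assms by (simp add: mat_mult_append[of _ N N _ N] assoc_mult_mat_vec[of _ N N _ N])

lemma cinner_measurement_stack:
  assumes U: "unitary_mat N U" and P0: "orth_projector N P0" and P1: "orth_projector N P1"
    and sum: "P0 + P1 = 1\<^sub>m N" and y: "y \<in> carrier_vec N" and z: "z \<in> carrier_vec N"
  shows "cinner (((P1 * U) @\<^sub>r (P0 * U)) *\<^sub>v y) (((P1 * U) @\<^sub>r (P0 * U)) *\<^sub>v z) = cinner y z"
proof -
  have c: "U \<in> carrier_mat N N" "P0 \<in> carrier_mat N N" "P1 \<in> carrier_mat N N"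
    using U P0 P1 by (simp_all add: unitary_mat_def orth_projector_def)
  have "cinner (((P1 * U) @\<^sub>r (P0 * U)) *\<^sub>v y) (((P1 * U) @\<^sub>r (P0 * U)) *\<^sub>v z) =
      cinner (P0 *\<^sub>v (U *\<^sub>v y)) (P0 *\<^sub>v (U *\<^sub>v z)) + cinner (P1 *\<^sub>v (U *\<^sub>v y)) (P1 *\<^sub>v (U *\<^sub>v z))"
    using c y z by (simp add: measurement_stack_mult_vec cinner_append)
  also have "\<dots> = cinner y z"
    using c y z by (simp add: cinner_orth_projector_pair[OF P0 P1 sum] cinner_unitary[OF U])
  finally show ?thesis .
qed

lemma vnorm2_measurement_stack:
  "unitary_mat N U \<Longrightarrow> orth_projector N P0 \<Longrightarrow> orth_projector N P1 \<Longrightarrow> P0 + P1 = 1\<^sub>m N \<Longrightarrow>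
    y \<in> carrier_vec N \<Longrightarrow> vnorm2 (((P1 * U) @\<^sub>r (P0 * U)) *\<^sub>v y) = vnorm2 y"
  using cinner_measurement_stack[of N U P0 P1 y y] by (simp flip: of_real_vnorm2)

definition block_columns :: "nat \<Rightarrow> nat \<Rightarrow> complex vec \<Rightarrow> complex mat" where
  "block_columns n m \<phi> = mat ((n + 1) * m) (n + 1) (\<lambda>(t, i). if t div m = i then \<phi> $ t else 0)"

lemma dim_block_columns [simp]:
  "dim_row (block_columns n m \<phi>) = (n + 1) * m" "dim_col (block_columns n m \<phi>) = n + 1"
  by (simp_all add: block_columns_def)

lemma block_columns_carrier [simp]: "block_columns n m \<phi> \<in> carrier_mat ((n + 1) * m) (n + 1)"
  by (simp add: block_columns_def)

lemma block_columns_mult_Fvec: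
  assumes \<phi>: "\<phi> \<in> carrier_vec ((n + 1) * m)"
  shows "block_columns n m \<phi> *\<^sub>v Fvec n x = query_op n m x *\<^sub>v \<phi>"
proof (rule eq_vecI)
  fix t assume "t < dim_vec (query_op n m x *\<^sub>v \<phi>)"
  then have "t < (n + 1) * m" by (simp add: query_op_def)
  then have t: "t < (n + 1) * m" "t div m < n + 1"
    using less_mult_imp_div_less by auto
  have "(block_columns n m \<phi> *\<^sub>v Fvec n x) $ t =
      (\<Sum>i<n + 1. (if t div m = i then \<phi> $ t else 0) * Fvec n x $ i)"
    using t by (simp add: block_columns_def Fvec_def scalar_prod_def lessThan_atLeast0)
  also have "\<dots> = Fvec n x $ (t div m) * \<phi> $ t"
    using t(2) by (simp add: if_distrib[of "\<lambda>z. z * _"] cong: if_cong)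
  finally show "(block_columns n m \<phi> *\<^sub>v Fvec n x) $ t = (query_op n m x *\<^sub>v \<phi>) $ t"
    using t \<phi> by (simp add: index_query_op_mult_vec)
qed (simp add: query_op_def)

lemma cinner_col_block_columns:
  "i < n + 1 \<Longrightarrow> k < n + 1 \<Longrightarrow> i \<noteq> k \<Longrightarrow>
    cinner (col (block_columns n m \<phi>) i) (col (block_columns n m \<phi>) k) = 0"
  by (simp add: cinner_def block_columns_def)

lemma sos_measurement_stack:
  assumes U: "unitary_mat ((n + 1) * m) U" and P0: "orth_projector ((n + 1) * m) P0"
    and P1: "orth_projector ((n + 1) * m) P1" and P: "P0 + P1 = 1\<^sub>m ((n + 1) * m)"
    and \<phi>: "\<phi> \<in> carrier_vec ((n + 1) * m)" "vnorm2 \<phi> = 1"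
    and exact: "\<And>x. x \<in> D \<Longrightarrow> vnorm2 ((if f x then P1 else P0) *\<^sub>v (U *\<^sub>v (query_op n m x *\<^sub>v \<phi>))) = 1"
  shows "sos1_rep_matrix n D f ((n + 1) * m) ((n + 1) * m)
    (((P1 * U) @\<^sub>r (P0 * U)) * block_columns n m \<phi>)"
proof -
  define N where "N = (n + 1) * m"
  note U = U[folded N_def] and P0 = P0[folded N_def] and P1 = P1[folded N_def]
    and P = P[folded N_def] and \<phi> = \<phi>[folded N_def]
  define S where "S = (P1 * U) @\<^sub>r (P0 * U)"
  define w where "w x = query_op n m x *\<^sub>v \<phi>" for x
  have c: "U \<in> carrier_mat N N" "P0 \<in> carrier_mat N N" "P1 \<in> carrier_mat N N"
    using U P0 P1 by (simp_all add: unitary_mat_def orth_projector_def)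
  have w: "w x \<in> carrier_vec N" "vnorm2 (w x) = 1" for x
    unfolding w_def N_def
    using mult_mat_vec_carrier[OF query_op_carrier] vnorm2_unitary[OF unitary_query_op] \<phi>
    by (simp_all only: N_def)
  have S: "S \<in> carrier_mat (N + N) N" using c by (simp add: S_def)
  define A where "A = S * block_columns n m \<phi>"
  have A: "A \<in> carrier_mat (N + N) (n + 1)"
    unfolding A_def using S block_columns_carrier[of n m \<phi>, folded N_def] by (rule mult_carrier_mat)
  have AF: "A *\<^sub>v Fvec n x = S *\<^sub>v w x" for x
    using assoc_mult_mat_vec[OF S block_columns_carrier[of n m \<phi>, folded N_def] Fvec_carrier]
      block_columns_mult_Fvec[OF \<phi>(1)[unfolded N_def]]
    by (simp add: A_def w_def)
  have "A *\<^sub>v Fvec n x = (P1 *\<^sub>v (U *\<^sub>v w x)) @\<^sub>v (P0 *\<^sub>v (U *\<^sub>v w x))" for x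
    unfolding AF unfolding S_def by (rule measurement_stack_mult_vec[OF c w(1)])
  then have accept: "(\<Sum>l<N. (cmod (row A l \<bullet> Fvec n x))\<^sup>2) = vnorm2 (P1 *\<^sub>v (U *\<^sub>v w x))" for x
    using c w by (intro sum_sq_row_scalar_prod_prefix) simp_all
  show ?thesis
    unfolding sos1_rep_matrix_def N_def[symmetric] S_def[symmetric] A_def[symmetric]
  proof (intro conjI ballI)
    show "A \<in> carrier_mat (N + N) (n + 1)" by (fact A)
  next
    fix x
    have "(\<Sum>l<N + N. (cmod (row A l \<bullet> Fvec n x))\<^sup>2) = vnorm2 (S *\<^sub>v w x)"
      using A by (simp add: sum_sq_row_scalar_prod AF carrier_matD)
    then show "(\<Sum>l<N + N. (cmod (row A l \<bullet> Fvec n x))\<^sup>2) = 1"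
      using vnorm2_measurement_stack[OF U P0 P1 P w(1)] w(2) by (simp add: S_def)
  next
    fix x assume x: "x \<in> D"
    have "vnorm2 (P0 *\<^sub>v (U *\<^sub>v w x)) + vnorm2 (P1 *\<^sub>v (U *\<^sub>v w x)) = 1"
      using w c vnorm2_orth_projector_pair[OF P0 P1 P] vnorm2_unitary[OF U] by simp
    then show "(if f x then 1 else 0) = (\<Sum>l<N. (cmod (row A l \<bullet> Fvec n x))\<^sup>2)"
      using exact[OF x] by (cases "f x") (simp_all add: accept w_def)
  qed
qed

lemma diagonal_measurement_stack:
  fixes \<phi> :: "complex vec"
  assumes U: "unitary_mat ((n + 1) * m) U" and P0: "orth_projector ((n + 1) * m) P0"
    and P1: "orth_projector ((n + 1) * m) P1" and P: "P0 + P1 = 1\<^sub>m ((n + 1) * m)"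
  defines "A \<equiv> ((P1 * U) @\<^sub>r (P0 * U)) * block_columns n m \<phi>"
  shows "diagonal_mat (mat_adjoint A * A)"
  unfolding diagonal_mat_def
proof (intro allI impI)
  define N where "N = (n + 1) * m"
  define S where "S = (P1 * U) @\<^sub>r (P0 * U)"
  have "U \<in> carrier_mat N N" "P0 \<in> carrier_mat N N" "P1 \<in> carrier_mat N N"
    using U P0 P1 by (simp_all add: N_def unitary_mat_def orth_projector_def)
  then have S: "S \<in> carrier_mat (N + N) N" by (simp add: S_def)
  fix i k assume "i < dim_row (mat_adjoint A * A)" "k < dim_col (mat_adjoint A * A)" "i \<noteq> k"
  then have ik: "i < n + 1" "k < n + 1" "i \<noteq> k" using S by (auto simp: A_def S_def[symmetric])
  have "(mat_adjoint A * A) $$ (i, k) = cinner (col A i) (col A k)"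
    using S ik by (intro index_adjoint_mult_self) (auto simp: A_def S_def[symmetric])
  also have "\<dots> = cinner (S *\<^sub>v col (block_columns n m \<phi>) i) (S *\<^sub>v col (block_columns n m \<phi>) k)"
    using ik col_mult2[OF S block_columns_carrier[of n m \<phi>, folded N_def]]
    by (simp add: A_def S_def[symmetric])
  also have "\<dots> = cinner (col (block_columns n m \<phi>) i) (col (block_columns n m \<phi>) k)"
    unfolding S_def
    by (rule cinner_measurement_stack[OF U P0 P1 P]) (metis col_dim dim_block_columns(1))+
  also have "\<dots> = 0"
    using ik by (rule cinner_col_block_columns)
  finally show "(mat_adjoint A * A) $$ (i, k) = 0" .
qed

lemma exact_1query_imp_orthogonal_sos:
  assumes "exact_1query_computable n D f"
  shows "\<exists>p q A. sos1_rep_matrix n D f p q A \<and> diagonal_mat (mat_adjoint A * A)"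
proof -
  obtain m \<psi> U0 U1 P0 P1 where \<psi>: "\<psi> \<in> carrier_vec ((n + 1) * m)" "vnorm2 \<psi> = 1"
    and U0: "unitary_mat ((n + 1) * m) U0" and U1: "unitary_mat ((n + 1) * m) U1"
    and P0: "orth_projector ((n + 1) * m) P0" and P1: "orth_projector ((n + 1) * m) P1"
    and P: "P0 + P1 = 1\<^sub>m ((n + 1) * m)"
    and exact: "\<And>x. x \<in> D \<Longrightarrow>
      vnorm2 ((if f x then P1 else P0) *\<^sub>v (U1 *\<^sub>v (query_op n m x *\<^sub>v (U0 *\<^sub>v \<psi>)))) = 1"
    using assms unfolding exact_1query_computable_def Let_def by blast
  have "U0 *\<^sub>v \<psi> \<in> carrier_vec ((n + 1) * m)" "vnorm2 (U0 *\<^sub>v \<psi>) = 1"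
    using U0 \<psi> vnorm2_unitary[OF U0] by (auto simp: unitary_mat_def)
  then show ?thesis
    using sos_measurement_stack[OF U1 P0 P1 P _ _ exact] diagonal_measurement_stack[OF U1 P0 P1 P]
    by blast
qed

definition amplitude_state :: "nat \<Rightarrow> nat \<Rightarrow> (nat \<Rightarrow> real) \<Rightarrow> complex vec" where
  "amplitude_state n m r =
    vec ((n + 1) * m) (\<lambda>t. if t mod m = 0 then complex_of_real (sqrt (r (t div m))) else 0)"

lemma amplitude_state_carrier: "amplitude_state n m r \<in> carrier_vec ((n + 1) * m)"
  by (simp add: amplitude_state_def)

lemma vnorm2_amplitude_state:
  assumes m: "m > 0" and r: "\<And>i. r i \<ge> 0"
  shows "vnorm2 (amplitude_state n m r) = (\<Sum>i<n + 1. r i)"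
proof -
  have "dim_vec (amplitude_state n m r) = (n + 1) * m" by (simp add: amplitude_state_def)
  then have "vnorm2 (amplitude_state n m r) = (\<Sum>i<n + 1. (cmod (amplitude_state n m r $ (i * m)))\<^sup>2)"
    unfolding vnorm2_def \<open>dim_vec (amplitude_state n m r) = (n + 1) * m\<close>
    by (intro sum_lessThan_mult_multiples[OF m]) (simp add: amplitude_state_def)
  also have "\<dots> = (\<Sum>i<n + 1. r i)"
  proof (rule sum.cong)
    fix i assume "i \<in> {..<n + 1}"
    then have "i * m < (n + 1) * m" using m by (intro mult_strict_right_mono) simp_all
    then show "(cmod (amplitude_state n m r $ (i * m)))\<^sup>2 = r i"
      using m r[of i] by (simp add: amplitude_state_def)
  qed simp
  finally show ?thesis .
qed

lemma permuted_unitary_query_amplitude_state: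
  fixes U B :: "complex mat"
  assumes m: "m > 0" and \<sigma>: "\<And>i. i < n + 1 \<Longrightarrow> \<sigma> (i * m) = i"
    and B: "B \<in> carrier_mat ((n + 1) * m) (n + 1)"
    and UB: "\<And>s i. s < (n + 1) * m \<Longrightarrow> i < n + 1 \<Longrightarrow>
      U $$ (s, i) * complex_of_real (sqrt (r i)) = B $$ (s, i)"
  shows "mat ((n + 1) * m) ((n + 1) * m) (\<lambda>(s, t). U $$ (s, \<sigma> t)) *\<^sub>v
      (query_op n m x *\<^sub>v amplitude_state n m r) = B *\<^sub>v Fvec n x"
proof (rule eq_vecI)
  define N where "N = (n + 1) * m"
  define z where "z = query_op n m x *\<^sub>v amplitude_state n m r"
  have zc: "z \<in> carrier_vec N"
    unfolding z_def N_def by (rule mult_mat_vec_carrier[OF query_op_carrier amplitude_state_carrier])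
  have z: "z $ t = Fvec n x $ (t div m) * amplitude_state n m r $ t" if "t < N" for t
    using that unfolding z_def N_def by (intro index_query_op_mult_vec amplitude_state_carrier)
  fix s assume "s < dim_vec (B *\<^sub>v Fvec n x)"
  then have s: "s < N" using B by (simp add: N_def)
  have "(mat N N (\<lambda>(s, t). U $$ (s, \<sigma> t)) *\<^sub>v z) $ s = (\<Sum>t<(n + 1) * m. U $$ (s, \<sigma> t) * z $ t)"
    using s zc by (simp add: N_def scalar_prod_def lessThan_atLeast0)
  also have "\<dots> = (\<Sum>i<n + 1. U $$ (s, \<sigma> (i * m)) * z $ (i * m))"
    using m z by (intro sum_lessThan_mult_multiples) (simp_all add: amplitude_state_def N_def)
  also have "\<dots> = (\<Sum>i<n + 1. B $$ (s, i) * Fvec n x $ i)"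
  proof (rule sum.cong)
    fix i assume "i \<in> {..<n + 1}"
    then have i: "i < n + 1" "i * m < N"
      using mult_strict_right_mono[of i "n + 1" m] m by (simp_all add: N_def)
    then show "U $$ (s, \<sigma> (i * m)) * z $ (i * m) = B $$ (s, i) * Fvec n x $ i"
      using UB[of s i] s m \<sigma>[OF i(1)] by (simp add: z amplitude_state_def N_def mult_ac)
  qed simp
  also have "\<dots> = (B *\<^sub>v Fvec n x) $ s"
    using B s by (simp add: N_def scalar_prod_def lessThan_atLeast0 Fvec_def)
  finally show "(mat ((n + 1) * m) ((n + 1) * m) (\<lambda>(s, t). U $$ (s, \<sigma> t)) *\<^sub>v
      (query_op n m x *\<^sub>v amplitude_state n m r)) $ s = (B *\<^sub>v Fvec n x) $ s"
    by (simp add: z_def N_def)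
qed (use B in simp)

lemma sos_column_norms_sum:
  assumes sos: "sos1_rep_matrix n D f p q A" and diag: "diagonal_mat (mat_adjoint A * A)"
  shows "(\<Sum>j<n + 1. vnorm2 (col A j)) = 1"
proof -
  have A: "A \<in> carrier_mat (p + q) (n + 1)" using sos by (simp add: sos1_rep_matrix_def)
  have "vnorm2 (A *\<^sub>v Fvec n x) = (\<Sum>j<n + 1. vnorm2 (col A j))" for x
    unfolding vnorm2_mult_orthogonal_columns[OF A diag Fvec_carrier]
    by (intro sum.cong) (simp_all add: cmod_Fvec)
  moreover have "(\<Sum>l<p + q. (cmod (row A l \<bullet> Fvec n (replicate n False)))\<^sup>2) = 1"
    using sos by (simp add: sos1_rep_matrix_def bitstrings_def)
  ultimately show ?thesis
    using A by (simp add: sum_sq_row_scalar_prod)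
qed

lemma orthogonal_columns_one_query_circuit:
  fixes A :: "complex mat"
  assumes A: "A \<in> carrier_mat P (n + 1)" and diag: "diagonal_mat (mat_adjoint A * A)"
  obtains m U where "m > 0" "P \<le> (n + 1) * m" "unitary_mat ((n + 1) * m) U"
    "\<And>x. U *\<^sub>v (query_op n m x *\<^sub>v amplitude_state n m (\<lambda>j. vnorm2 (col A j))) =
      vec ((n + 1) * m) (\<lambda>s. if s < P then (A *\<^sub>v Fvec n x) $ s else 0)"
proof -
  define K where "K = (n + 1) * (P + 1)"
  obtain U where U: "unitary_mat (K + K) U"
    and UA: "\<And>s j. s < K + K \<Longrightarrow> j < n + 1 \<Longrightarrow>
      U $$ (s, j) * of_real (sqrt (vnorm2 (col A j))) = (if s < P then A $$ (s, j) else 0)"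
    using orthogonal_columns_unitary_factor[OF A diag, of K] by (auto simp: K_def)
  \<comment> \<open>This choice of \<open>m\<close> makes the dimension \<open>(n + 1) m\<close> equal to \<open>K + K\<close>, that of \<open>U\<close>;
    \<open>\<sigma>\<close> transposes the \<open>(n + 1) \<times> m\<close> grid and sends \<open>|i,0\<rangle>\<close> to column \<open>i\<close> of \<open>U\<close>.\<close>
  define m where "m = 2 * (P + 1)"
  define N where "N = (n + 1) * m"
  have N: "N = K + K" and m: "m > 0" by (simp_all add: N_def K_def m_def)
  define \<sigma> where "\<sigma> t = t mod m * (n + 1) + t div m" for t
  have "inj_on \<sigma> {..<N}" "\<sigma> ` {..<N} \<subseteq> {..<N}"
    unfolding \<sigma>_def N_def using inj_on_grid_transpose[of m "n + 1"] by (simp_all add: mult.commute)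
  then have U1: "unitary_mat N (mat N N (\<lambda>(s, t). U $$ (s, \<sigma> t)))"
    using U by (intro unitary_permute_cols) (simp_all add: N)
  define B where "B = mat N (n + 1) (\<lambda>(s, i). if s < P then A $$ (s, i) else 0)"
  have "mat N N (\<lambda>(s, t). U $$ (s, \<sigma> t)) *\<^sub>v
      (query_op n m x *\<^sub>v amplitude_state n m (\<lambda>j. vnorm2 (col A j))) = B *\<^sub>v Fvec n x" for x
    unfolding N_def
  proof (rule permuted_unitary_query_amplitude_state[OF m])
    show "\<sigma> (i * m) = i" if "i < n + 1" for i using that m by (simp add: \<sigma>_def)
  qed (use UA in \<open>simp_all add: B_def N[symmetric] N_def\<close>)
  moreover have "B *\<^sub>v Fvec n x = vec N (\<lambda>s. if s < P then (A *\<^sub>v Fvec n x) $ s else 0)" for x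
    using A by (intro eq_vecI) (simp_all add: B_def scalar_prod_def lessThan_atLeast0 Fvec_def)
  moreover have "P \<le> N" by (simp add: N K_def)
  ultimately show ?thesis
    using that[OF m _ U1[unfolded N_def]] by (simp add: N_def)
qed

lemma orthogonal_sos_imp_exact_1query:
  assumes D: "D \<subseteq> bitstrings n" and sos: "sos1_rep_matrix n D f p q A"
    and diag: "diagonal_mat (mat_adjoint A * A)"
  shows "exact_1query_computable n D f"
proof -
  have A: "A \<in> carrier_mat (p + q) (n + 1)"
    and accept: "\<And>x. x \<in> D \<Longrightarrow> (if f x then 1 else 0) = (\<Sum>l<p. (cmod (row A l \<bullet> Fvec n x))\<^sup>2)"
    and total: "\<And>x. x \<in> bitstrings n \<Longrightarrow> (\<Sum>l<p + q. (cmod (row A l \<bullet> Fvec n x))\<^sup>2) = 1"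
    using sos by (simp_all add: sos1_rep_matrix_def)
  define r where "r j = vnorm2 (col A j)" for j
  obtain m U where m: "m > 0" and PN: "p + q \<le> (n + 1) * m" and U: "unitary_mat ((n + 1) * m) U"
    and state: "\<And>x. U *\<^sub>v (query_op n m x *\<^sub>v amplitude_state n m r) =
      vec ((n + 1) * m) (\<lambda>s. if s < p + q then (A *\<^sub>v Fvec n x) $ s else 0)"
    using orthogonal_columns_one_query_circuit[OF A diag] unfolding r_def[symmetric] by blast
  define N where "N = (n + 1) * m"
  note PN = PN[folded N_def] and U = U[folded N_def] and state = state[folded N_def]
  define P1 where "P1 = coord_projector N (\<lambda>s. s < p)"
  define P0 where "P0 = coord_projector N (\<lambda>s. \<not> s < p)"
  have P: "orth_projector N P0" "orth_projector N P1" "P0 + P1 = 1\<^sub>m N"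
    by (simp_all add: P0_def P1_def orth_projector_coord_projector coord_projector_add_complement)
  have exact:
    "vnorm2 ((if f x then P1 else P0) *\<^sub>v (U *\<^sub>v (query_op n m x *\<^sub>v amplitude_state n m r))) = 1"
    if x: "x \<in> D" for x
  proof -
    define y where "y = vec N (\<lambda>s. if s < p + q then (A *\<^sub>v Fvec n x) $ s else 0)"
    have y: "y \<in> carrier_vec N" by (simp add: y_def)
    have "p \<le> N" using PN by simp
    then have "vnorm2 (P1 *\<^sub>v y) = (if f x then 1 else 0)"
      using A PN unfolding P1_def vnorm2_coord_projector_prefix[OF y \<open>p \<le> N\<close>]
      by (simp add: y_def accept[OF x])
    moreover have "vnorm2 y = 1"
      using A PN total x D by (auto simp: y_def vnorm2_vec_if_less)
    moreover have "vnorm2 (P0 *\<^sub>v y) + vnorm2 (P1 *\<^sub>v y) = vnorm2 y"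
      by (rule vnorm2_orth_projector_pair[OF P y])
    ultimately show ?thesis
      by (cases "f x") (simp_all add: state y_def)
  qed
  show ?thesis
  proof (rule exact_1query_computableI[where m = m and n = n, folded N_def])
    show "unitary_mat N (1\<^sub>m N)" by (simp add: unitary_mat_def)
    show "vnorm2 (amplitude_state n m r) = 1"
      using m sos_column_norms_sum[OF sos diag] by (simp add: vnorm2_amplitude_state r_def vnorm2_nonneg)
    show "vnorm2 ((if f x then P1 else P0) *\<^sub>v
        (U *\<^sub>v (query_op n m x *\<^sub>v (1\<^sub>m N *\<^sub>v amplitude_state n m r)))) = 1"
      if "x \<in> D" for x
      using exact[OF that] amplitude_state_carrier[of n m r, folded N_def] by simp
  qed (use m amplitude_state_carrier U P in \<open>simp_all add: N_def\<close>)
qed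

theorem theorem3:
  fixes n :: nat and D :: "bool list set" and f :: "bool list \<Rightarrow> bool"
  assumes "D \<subseteq> bitstrings n"
    and "\<exists>x\<in>D. \<exists>y\<in>D. f x \<noteq> f y"
  shows "exact_1query_computable n D f \<longleftrightarrow>
    (\<exists>p q A u. sos1_rep_matrix n D f p q A \<and>
       mat_adjoint A * A = mat (n + 1) (n + 1) (\<lambda>(i, j). if i = j then u i else 0))"
proof -
  have diagonal_iff: "diagonal_mat (mat_adjoint A * A) \<longleftrightarrow>
      (\<exists>u. mat_adjoint A * A = mat (n + 1) (n + 1) (\<lambda>(i, j). if i = j then u i else 0))"
    if "sos1_rep_matrix n D f p q A" for p q A
    using that by (intro diagonal_mat_iff_exists) (auto simp: sos1_rep_matrix_def)
  show ?thesis
  proof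
    assume "exact_1query_computable n D f"
    then obtain p q A where "sos1_rep_matrix n D f p q A" "diagonal_mat (mat_adjoint A * A)"
      using exact_1query_imp_orthogonal_sos by blast
    then show "\<exists>p q A u. sos1_rep_matrix n D f p q A \<and>
        mat_adjoint A * A = mat (n + 1) (n + 1) (\<lambda>(i, j). if i = j then u i else 0)"
      using diagonal_iff by blast
  next
    assume "\<exists>p q A u. sos1_rep_matrix n D f p q A \<and>
        mat_adjoint A * A = mat (n + 1) (n + 1) (\<lambda>(i, j). if i = j then u i else 0)"
    then obtain p q A where sos: "sos1_rep_matrix n D f p q A"
      and "diagonal_mat (mat_adjoint A * A)"
      using diagonal_iff by blast
    then show "exact_1query_computable n D f"
      by (rule orthogonal_sos_imp_exact_1query[OF assms(1)])
  qed
qed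

end
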